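(* Let $\alpha>0$ be a constant. If $g(n)\le \alpha n^2$ for all $n$, then $f_4(n)\le \alpha(1+o(1))\frac{n^2}{2}$ as $n\to\infty$.
   Context: $K_n$ is the complete graph and $K_n^{(4)}$ the complete $4$-uniform hypergraph on $n$ vertices. A complete $4$-partite $4$-graph is given by pairwise disjoint nonempty vertex sets $V_1,\dots,V_4$, with edges all $4$-sets meeting each $V_i$ in exactly one vertex; $f_4(n)$ is the minimum number of complete $4$-partite $4$-graphs whose edge sets partition the edge set of $K_n^{(4)}$. A complete bipartite subgraph of a graph $G$ has two disjoint nonempty vertex classes $X,Y$ and edge set all $xy$ with $x\in X,y\in Y$ (all these being edges of $G$). For graphs $G,H$, a block is a set $E(B_1)\times E(B_2)$ where $B_1$ is a complete bipartite subgraph of $G$ and $B_2$ is a complete bipartite subgraph of $H$; $g(G,H)$ is the minimum number of blocks partitioning $E(G)\times E(H)$, and $g(n)=g(K_n,K_n)$. *)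

theory Defs
  imports Complex_Main
begin

definition hedges4 :: "nat \<Rightarrow> nat set set" where
  "hedges4 n = {e. e \<subseteq> {..<n} \<and> card e = 4}"

definition kpart4_edges :: "nat set \<times> nat set \<times> nat set \<times> nat set \<Rightarrow> nat set set" where
  "kpart4_edges P = (case P of (V1, V2, V3, V4) \<Rightarrow>
     {{a, b, c, d} | a b c d. a \<in> V1 \<and> b \<in> V2 \<and> c \<in> V3 \<and> d \<in> V4})"

definition is_complete_4partite :: "nat \<Rightarrow> nat set \<times> nat set \<times> nat set \<times> nat set \<Rightarrow> bool" where
  "is_complete_4partite n P = (case P of (V1, V2, V3, V4) \<Rightarrow>
     V1 \<subseteq> {..<n} \<and> V2 \<subseteq> {..<n} \<and> V3 \<subseteq> {..<n} \<and> V4 \<subseteq> {..<n} \<and>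
     V1 \<noteq> {} \<and> V2 \<noteq> {} \<and> V3 \<noteq> {} \<and> V4 \<noteq> {} \<and>
     V1 \<inter> V2 = {} \<and> V1 \<inter> V3 = {} \<and> V1 \<inter> V4 = {} \<and>
     V2 \<inter> V3 = {} \<and> V2 \<inter> V4 = {} \<and> V3 \<inter> V4 = {})"

definition f4 :: "nat \<Rightarrow> nat" where
  "f4 n = (LEAST k. \<exists>Ps. length Ps = k \<and> (\<forall>P\<in>set Ps. is_complete_4partite n P) \<and>
      (\<forall>i<k. \<forall>j<k. i \<noteq> j \<longrightarrow> kpart4_edges (Ps ! i) \<inter> kpart4_edges (Ps ! j) = {}) \<and>
      (\<Union>P\<in>set Ps. kpart4_edges P) = hedges4 n)"

(* A graph is given by a vertex set V and a set E of 2-element subsets of V. *)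
definition bip_edges :: "'a set \<Rightarrow> 'a set \<Rightarrow> 'a set set" where
  "bip_edges X Y = {{x, y} | x y. x \<in> X \<and> y \<in> Y}"

definition is_complete_bipartite_subgraph :: "'a set \<Rightarrow> 'a set set \<Rightarrow> 'a set \<Rightarrow> 'a set \<Rightarrow> bool" where
  "is_complete_bipartite_subgraph V E X Y \<longleftrightarrow>
     X \<subseteq> V \<and> Y \<subseteq> V \<and> X \<noteq> {} \<and> Y \<noteq> {} \<and> X \<inter> Y = {} \<and> bip_edges X Y \<subseteq> E"

definition block :: "'a set \<times> 'a set \<times> 'b set \<times> 'b set \<Rightarrow> ('a set \<times> 'b set) set" where
  "block B = (case B of (X1, Y1, X2, Y2) \<Rightarrow> bip_edges X1 Y1 \<times> bip_edges X2 Y2)"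

definition is_block :: "'a set \<Rightarrow> 'a set set \<Rightarrow> 'b set \<Rightarrow> 'b set set \<Rightarrow>
    'a set \<times> 'a set \<times> 'b set \<times> 'b set \<Rightarrow> bool" where
  "is_block V1 E1 V2 E2 B = (case B of (X1, Y1, X2, Y2) \<Rightarrow>
     is_complete_bipartite_subgraph V1 E1 X1 Y1 \<and> is_complete_bipartite_subgraph V2 E2 X2 Y2)"

definition gGH :: "'a set \<Rightarrow> 'a set set \<Rightarrow> 'b set \<Rightarrow> 'b set set \<Rightarrow> nat" where
  "gGH V1 E1 V2 E2 = (LEAST k. \<exists>Bs. length Bs = k \<and> (\<forall>B\<in>set Bs. is_block V1 E1 V2 E2 B) \<and>
      (\<forall>i<k. \<forall>j<k. i \<noteq> j \<longrightarrow> block (Bs ! i) \<inter> block (Bs ! j) = {}) \<and>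
      (\<Union>B\<in>set Bs. block B) = E1 \<times> E2)"

definition Kn_edges :: "nat \<Rightarrow> nat set set" where
  "Kn_edges n = {e. e \<subseteq> {..<n} \<and> card e = 2}"

definition g :: "nat \<Rightarrow> nat" where
  "g n = gGH {..<n} (Kn_edges n) {..<n} (Kn_edges n)"

end

theory Submission
  imports Defs "HOL-Real_Asymp.Real_Asymp"
begin

(* Split the vertices of K_2m^(4) into halves A and B of size m and sort the 4-sets by how they
   meet A. Those inside one half are covered by two copies of an optimal partition of K_m^(4).
   Those meeting each half in two points are the sets p \<union> q' with p an edge of K_m on A and q' one
   on B, i.e. a copy of E(K_m) \<times> E(K_m); a block E(X1,Y1) \<times> E(X2,Y2) of a partition of it is
   exactly the complete 4-partite 4-graph with classes X1, Y1, X2', Y2' (primes marking the copies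
   in B). Those meeting one half in three points are grouped by the middle one of these three
   points, one complete 4-partite 4-graph per middle point, so at most 2m of them. Adding one more
   vertex costs at most n parts in the same way, hence f4 n \<le> 2 f4 m + g m + 4 m for m = n div 2,
   and induction with g m \<le> \<alpha> m^2 gives f4 n \<le> \<alpha> n^2 / 2 + 5 n^(3/2). *)

section \<open>Partitions indexed by lists\<close>

definition list_partitions :: "('p \<Rightarrow> 'e set) \<Rightarrow> 'p list \<Rightarrow> 'e set \<Rightarrow> bool" where
  "list_partitions F Ps T \<longleftrightarrow>
     (\<forall>i<length Ps. \<forall>j<length Ps. i \<noteq> j \<longrightarrow> F (Ps ! i) \<inter> F (Ps ! j) = {}) \<and>
     (\<Union>P\<in>set Ps. F P) = T"

lemma list_partitions_Nil: "list_partitions F [] {}"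
  by (simp add: list_partitions_def)

lemma list_partitions_subset: "list_partitions F Ps T \<Longrightarrow> P \<in> set Ps \<Longrightarrow> F P \<subseteq> T"
  by (auto simp: list_partitions_def)

lemma list_partitions_append:
  assumes "list_partitions F Ps S" "list_partitions F Qs T" "S \<inter> T = {}"
  shows "list_partitions F (Ps @ Qs) (S \<union> T)"
proof -
  have cross: "F (Ps ! i) \<inter> F (Qs ! k) = {}" if "i < length Ps" "k < length Qs" for i k
    using list_partitions_subset[OF assms(1), of "Ps ! i"]
      list_partitions_subset[OF assms(2), of "Qs ! k"] that assms(3) by auto
  have "F ((Ps @ Qs) ! i) \<inter> F ((Ps @ Qs) ! j) = {}"
    if "i < length (Ps @ Qs)" "j < length (Ps @ Qs)" "i \<noteq> j" for i j
    using that assms(1,2) cross[of i "j - length Ps"] cross[of j "i - length Ps"]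
    by (cases "i < length Ps"; cases "j < length Ps")
      (auto simp: list_partitions_def nth_append not_less less_diff_conv2)
  then show ?thesis
    using assms by (auto simp: list_partitions_def)
qed

lemma list_partitions_map_image:
  assumes "list_partitions F Ps T" "\<And>P. P \<in> set Ps \<Longrightarrow> G (h P) = \<phi> ` F P" "inj_on \<phi> T"
  shows "list_partitions G (map h Ps) (\<phi> ` T)"
proof -
  have "G (h (Ps ! i)) \<inter> G (h (Ps ! j)) = {}"
    if "i < length Ps" "j < length Ps" "i \<noteq> j" for i j
  proof -
    have "G (h (Ps ! i)) \<inter> G (h (Ps ! j)) = \<phi> ` (F (Ps ! i) \<inter> F (Ps ! j))"
      using assms(2) inj_on_image_Int[OF assms(3)] list_partitions_subset[OF assms(1)] that by simp
    then show ?thesis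
      using assms(1) that by (simp add: list_partitions_def)
  qed
  moreover have "(\<Union>P\<in>set (map h Ps). G P) = \<phi> ` T"
    using assms(1,2) by (auto simp: list_partitions_def)
  ultimately show ?thesis
    by (auto simp: list_partitions_def)
qed

lemma list_partitions_map_distinct:
  assumes "distinct xs"
    and "\<And>x y. x \<in> set xs \<Longrightarrow> y \<in> set xs \<Longrightarrow> x \<noteq> y \<Longrightarrow> F (h x) \<inter> F (h y) = {}"
    and "(\<Union>x\<in>set xs. F (h x)) = T"
  shows "list_partitions F (map h xs) T"
  using assms by (auto simp: list_partitions_def nth_eq_iff_index_eq)

lemma Least_length_le: "Q xs \<Longrightarrow> (LEAST k. \<exists>ys. length ys = k \<and> Q ys) \<le> length xs"
  by (rule Least_le) blast

lemma Least_length_attained: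
  "Q xs \<Longrightarrow> \<exists>ys. Q ys \<and> length ys = (LEAST k. \<exists>ys. length ys = k \<and> Q ys)"
  using LeastI_ex[of "\<lambda>k. \<exists>ys. length ys = k \<and> Q ys"] by blast

section \<open>Optimal partitions\<close>

type_synonym quadruple = "nat set \<times> nat set \<times> nat set \<times> nat set"

definition complete_4partite_partition :: "nat \<Rightarrow> quadruple list \<Rightarrow> bool" where
  "complete_4partite_partition n Ps \<longleftrightarrow>
     (\<forall>P\<in>set Ps. is_complete_4partite n P) \<and> list_partitions kpart4_edges Ps (hedges4 n)"

definition block_partition :: "nat \<Rightarrow> quadruple list \<Rightarrow> bool" where
  "block_partition m Bs \<longleftrightarrow>
     (\<forall>B\<in>set Bs. is_block {..<m} (Kn_edges m) {..<m} (Kn_edges m) B) \<and>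
     list_partitions block Bs (Kn_edges m \<times> Kn_edges m)"

lemma f4_eq_Least: "f4 n = (LEAST k. \<exists>Ps. length Ps = k \<and> complete_4partite_partition n Ps)"
  unfolding f4_def complete_4partite_partition_def list_partitions_def
  by (intro arg_cong[where f = Least] ext) auto

lemma g_eq_Least: "g m = (LEAST k. \<exists>Bs. length Bs = k \<and> block_partition m Bs)"
  unfolding g_def gGH_def block_partition_def list_partitions_def
  by (intro arg_cong[where f = Least] ext) auto

lemma f4_le_length: "complete_4partite_partition n Ps \<Longrightarrow> f4 n \<le> length Ps"
  unfolding f4_eq_Least by (rule Least_length_le)

lemma f4_attained:
  assumes "complete_4partite_partition n Ps"
  shows "\<exists>Qs. complete_4partite_partition n Qs \<and> length Qs = f4 n"
  unfolding f4_eq_Least using Least_length_attained[of "complete_4partite_partition n"] assms by blast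

lemma g_attained:
  assumes "block_partition m Bs"
  shows "\<exists>Cs. block_partition m Cs \<and> length Cs = g m"
  unfolding g_eq_Least using Least_length_attained[of "block_partition m"] assms by blast

lemma card_2_Min_Max:
  fixes p :: "'a::linorder set"
  assumes "card p = 2"
  shows "p = {Min p, Max p} \<and> Min p < Max p"
proof -
  obtain x y where "p = {x, y}" "x < y"
    using assms by (auto simp: card_2_iff neq_iff insert_commute)
  then show ?thesis
    by simp
qed

definition singleton_block :: "nat set \<times> nat set \<Rightarrow> quadruple" where
  "singleton_block pq = ({Min (fst pq)}, {Max (fst pq)}, {Min (snd pq)}, {Max (snd pq)})"

lemma bip_edges_singletons: "bip_edges {a} {b} = {{a, b}}"
  by (auto simp: bip_edges_def)

lemma block_singleton_block:
  assumes "p \<in> Kn_edges m" "q \<in> Kn_edges m"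
  shows "block (singleton_block (p, q)) = {(p, q)}"
  using assms card_2_Min_Max[of p] card_2_Min_Max[of q]
  by (simp add: Kn_edges_def singleton_block_def block_def bip_edges_singletons)

lemma is_block_singleton_block:
  assumes "p \<in> Kn_edges m" "q \<in> Kn_edges m"
  shows "is_block {..<m} (Kn_edges m) {..<m} (Kn_edges m) (singleton_block (p, q))"
proof -
  have "p = {Min p, Max p}" "Min p < Max p" "q = {Min q, Max q}" "Min q < Max q"
    using assms card_2_Min_Max[of p] card_2_Min_Max[of q] by (auto simp: Kn_edges_def)
  then show ?thesis
    using assms
    by (auto simp: is_block_def singleton_block_def is_complete_bipartite_subgraph_def
        bip_edges_singletons Kn_edges_def)
qed

lemma block_partition_exists: "\<exists>Bs. block_partition m Bs"
proof -
  have "finite (Kn_edges m)"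
    by (rule finite_subset[of _ "Pow {..<m}"]) (auto simp: Kn_edges_def)
  then obtain xs where xs: "set xs = Kn_edges m \<times> Kn_edges m" "distinct xs"
    using finite_distinct_list[of "Kn_edges m \<times> Kn_edges m"] by blast
  have "list_partitions block (map singleton_block xs) (Kn_edges m \<times> Kn_edges m)"
    by (rule list_partitions_map_distinct[OF xs(2)]) (use xs(1) block_singleton_block in auto)
  moreover have "is_block {..<m} (Kn_edges m) {..<m} (Kn_edges m) B"
    if "B \<in> set (map singleton_block xs)" for B
    using that xs(1) is_block_singleton_block by auto
  ultimately show ?thesis
    unfolding block_partition_def by blast
qed

section \<open>Four-sets across a bipartition\<close>

definition split_edges :: "'a set \<Rightarrow> 'a set \<Rightarrow> nat \<Rightarrow> nat \<Rightarrow> 'a set set" where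
  "split_edges A B i j = {e. e \<subseteq> A \<union> B \<and> card (e \<inter> A) = i \<and> card (e \<inter> B) = j}"

lemma split_edges_swap: "split_edges B A j i = split_edges A B i j"
  by (auto simp: split_edges_def)

lemma card_eq_card_Int_add:
  assumes "finite e" "A \<inter> B = {}" "e \<subseteq> A \<union> B"
  shows "card e = card (e \<inter> A) + card (e \<inter> B)"
proof -
  have "e = (e \<inter> A) \<union> (e \<inter> B)"
    using assms(3) by blast
  then show ?thesis
    using assms(1,2) card_Un_disjoint[of "e \<inter> A" "e \<inter> B"] by fastforce
qed

lemma card4_subsets_split:
  assumes "finite (A \<union> B)" "A \<inter> B = {}"
  shows "{e. e \<subseteq> A \<union> B \<and> card e = 4} =
    split_edges A B 4 0 \<union> split_edges A B 3 1 \<union> split_edges A B 2 2 \<union>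
    split_edges A B 1 3 \<union> split_edges A B 0 4"
proof -
  have card_e: "card e = card (e \<inter> A) + card (e \<inter> B)" if "e \<subseteq> A \<union> B" for e
    using card_eq_card_Int_add[OF finite_subset[OF that assms(1)] assms(2) that] .
  show ?thesis
  proof (intro set_eqI iffI)
    fix e
    assume e: "e \<in> {e. e \<subseteq> A \<union> B \<and> card e = 4}"
    then have "card (e \<inter> A) + card (e \<inter> B) = 4"
      using card_e[of e] by simp
    then have "card (e \<inter> A) = 4 \<and> card (e \<inter> B) = 0 \<or> card (e \<inter> A) = 3 \<and> card (e \<inter> B) = 1 \<or>
        card (e \<inter> A) = 2 \<and> card (e \<inter> B) = 2 \<or> card (e \<inter> A) = 1 \<and> card (e \<inter> B) = 3 \<or>
        card (e \<inter> A) = 0 \<and> card (e \<inter> B) = 4"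
      by linarith
    then show "e \<in> split_edges A B 4 0 \<union> split_edges A B 3 1 \<union> split_edges A B 2 2 \<union>
        split_edges A B 1 3 \<union> split_edges A B 0 4"
      using e by (simp add: split_edges_def)
  next
    fix e
    assume "e \<in> split_edges A B 4 0 \<union> split_edges A B 3 1 \<union> split_edges A B 2 2 \<union>
        split_edges A B 1 3 \<union> split_edges A B 0 4"
    then have "e \<subseteq> A \<union> B" "card (e \<inter> A) + card (e \<inter> B) = 4"
      by (auto simp: split_edges_def)
    then show "e \<in> {e. e \<subseteq> A \<union> B \<and> card e = 4}"
      using card_e[of e] by simp
  qed
qed

lemma split_edges_4_0:
  assumes "finite (A \<union> B)" "A \<inter> B = {}"
  shows "split_edges A B 4 0 = {e. e \<subseteq> A \<and> card e = 4}"
proof (intro set_eqI iffI)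
  fix e
  assume "e \<in> split_edges A B 4 0"
  then have e: "e \<subseteq> A \<union> B" "card (e \<inter> A) = 4" "card (e \<inter> B) = 0"
    by (auto simp: split_edges_def)
  then have "e \<inter> B = {}"
    using finite_subset[OF e(1) assms(1)] by simp
  then have "e \<subseteq> A"
    using e(1) by blast
  then show "e \<in> {e. e \<subseteq> A \<and> card e = 4}"
    using e(2) by (simp add: Int_absorb2)
next
  fix e
  assume e: "e \<in> {e. e \<subseteq> A \<and> card e = 4}"
  then have "e \<inter> B = {}"
    using assms(2) by blast
  then show "e \<in> split_edges A B 4 0"
    using e by (auto simp: split_edges_def Int_absorb2)
qed

lemma split_edges_singleton_empty:
  assumes "2 \<le> j"
  shows "split_edges A {b} i j = {}"
proof -
  have "card (e \<inter> {b}) \<noteq> j" for e :: "'a set"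
    using card_mono[of "{b}" "e \<inter> {b}"] assms by simp
  then show ?thesis
    by (auto simp: split_edges_def)
qed

lemma kpart4_edges_iff:
  "e \<in> kpart4_edges (V1, V2, V3, V4) \<longleftrightarrow>
     (\<exists>a b c d. e = {a, b, c, d} \<and> a \<in> V1 \<and> b \<in> V2 \<and> c \<in> V3 \<and> d \<in> V4)"
  by (auto simp: kpart4_edges_def)

lemma card_3_sorted:
  fixes S :: "'a::linorder set"
  assumes "card S = 3"
  shows "\<exists>a b c. S = {a, b, c} \<and> a < b \<and> b < c"
proof -
  have "finite S"
    using assms by (simp add: card_ge_0_finite)
  moreover have "length (sorted_list_of_set S) = 3"
    using assms by simp
  then obtain a b c where "sorted_list_of_set S = [a, b, c]"
    by (auto simp del: length_sorted_list_of_set simp: numeral_3_eq_3 length_Suc_conv)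
  ultimately show ?thesis
    using sorted_list_of_set(1)[of S] strict_sorted_list_of_set[of S] by auto
qed

lemma sorted_triple_middle_eq:
  fixes a b c a' b' c' :: "'a::linorder"
  assumes "{a, b, c} = {a', b', c'}" "a < b" "b < c" "a' < b'" "b' < c'"
  shows "b = b'"
proof -
  have "a' \<in> {a, b, c}" "b' \<in> {a, b, c}" "c' \<in> {a, b, c}"
       "a \<in> {a', b', c'}" "c \<in> {a', b', c'}"
    using assms(1) by blast+
  then show ?thesis
    using assms(2-) by auto
qed

definition middle_part :: "nat set \<Rightarrow> nat set \<Rightarrow> nat \<Rightarrow> quadruple" where
  "middle_part A B c = ({x\<in>A. x < c}, {c}, {x\<in>A. c < x}, B)"

definition middle_split :: "nat set \<Rightarrow> nat set \<Rightarrow> quadruple list" where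
  "middle_split A B = map (middle_part A B)
     (filter (\<lambda>c. \<exists>x\<in>A. \<exists>y\<in>A. x < c \<and> c < y) (sorted_list_of_set A))"

lemma length_middle_split: "length (middle_split A B) \<le> card A"
  unfolding middle_split_def using length_filter_le[of _ "sorted_list_of_set A"] by simp

lemma kpart4_edges_middle_part:
  "e \<in> kpart4_edges (middle_part A B c) \<longleftrightarrow>
     (\<exists>a b d. e = {a, c, b, d} \<and> a \<in> A \<and> a < c \<and> b \<in> A \<and> c < b \<and> d \<in> B)"
  unfolding middle_part_def kpart4_edges_iff by blast

lemma kpart4_edges_middle_part_split_edges:
  assumes "c \<in> A" "A \<inter> B = {}"
  shows "e \<in> kpart4_edges (middle_part A B c) \<longleftrightarrow>
    (\<exists>a b d. e \<inter> A = {a, c, b} \<and> a < c \<and> c < b \<and> e \<inter> B = {d} \<and> e \<subseteq> A \<union> B)"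
proof
  assume "e \<in> kpart4_edges (middle_part A B c)"
  then obtain a b d where "e = {a, c, b, d}" "a \<in> A" "a < c" "b \<in> A" "c < b" "d \<in> B"
    unfolding kpart4_edges_middle_part by blast
  moreover have "d \<notin> A"
    using \<open>d \<in> B\<close> assms(2) by blast
  ultimately show "\<exists>a b d. e \<inter> A = {a, c, b} \<and> a < c \<and> c < b \<and> e \<inter> B = {d} \<and> e \<subseteq> A \<union> B"
    using assms by (intro exI[of _ a] exI[of _ b] exI[of _ d]) auto
next
  assume "\<exists>a b d. e \<inter> A = {a, c, b} \<and> a < c \<and> c < b \<and> e \<inter> B = {d} \<and> e \<subseteq> A \<union> B"
  then obtain a b d where abd: "e \<inter> A = {a, c, b}" "a < c" "c < b" "e \<inter> B = {d}" "e \<subseteq> A \<union> B"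
    by blast
  then have "e = {a, c, b, d}"
    by blast
  moreover have "a \<in> A" "b \<in> A" "d \<in> B"
    using abd(1,4) by blast+
  ultimately show "e \<in> kpart4_edges (middle_part A B c)"
    unfolding kpart4_edges_middle_part using abd(2,3) by blast
qed

lemma kpart4_edges_middle_part_disjoint:
  assumes "c \<in> A" "c' \<in> A" "c \<noteq> c'" "A \<inter> B = {}"
  shows "kpart4_edges (middle_part A B c) \<inter> kpart4_edges (middle_part A B c') = {}"
proof (rule equals0I)
  fix e
  assume "e \<in> kpart4_edges (middle_part A B c) \<inter> kpart4_edges (middle_part A B c')"
  then have e: "e \<in> kpart4_edges (middle_part A B c)" "e \<in> kpart4_edges (middle_part A B c')"
    by simp_all
  obtain a b where "e \<inter> A = {a, c, b}" "a < c" "c < b"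
    using e(1) unfolding kpart4_edges_middle_part_split_edges[OF assms(1,4)] by blast
  moreover obtain a' b' where "e \<inter> A = {a', c', b'}" "a' < c'" "c' < b'"
    using e(2) unfolding kpart4_edges_middle_part_split_edges[OF assms(2,4)] by blast
  ultimately show False
    using sorted_triple_middle_eq[of a c b a' c' b'] assms(3) by metis
qed

lemma UN_kpart4_edges_middle_part:
  assumes "A \<inter> B = {}"
  shows "(\<Union>c\<in>{c\<in>A. \<exists>x\<in>A. \<exists>y\<in>A. x < c \<and> c < y}. kpart4_edges (middle_part A B c)) =
    split_edges A B 3 1"
proof (intro set_eqI iffI)
  fix e
  assume "e \<in> (\<Union>c\<in>{c\<in>A. \<exists>x\<in>A. \<exists>y\<in>A. x < c \<and> c < y}. kpart4_edges (middle_part A B c))"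
  then obtain c where c: "c \<in> A" "e \<in> kpart4_edges (middle_part A B c)"
    by blast
  then obtain a b d where "e \<inter> A = {a, c, b}" "a < c" "c < b" "e \<inter> B = {d}" "e \<subseteq> A \<union> B"
    unfolding kpart4_edges_middle_part_split_edges[OF c(1) assms] by blast
  then show "e \<in> split_edges A B 3 1"
    by (simp add: split_edges_def)
next
  fix e
  assume e: "e \<in> split_edges A B 3 1"
  obtain a c b where acb: "e \<inter> A = {a, c, b}" "a < c" "c < b"
    using e card_3_sorted[of "e \<inter> A"] by (auto simp: split_edges_def)
  obtain d where d: "e \<inter> B = {d}"
    using e by (auto simp: split_edges_def card_1_singleton_iff)
  have c: "c \<in> {c\<in>A. \<exists>x\<in>A. \<exists>y\<in>A. x < c \<and> c < y}"
    using acb by blast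
  have "e \<subseteq> A \<union> B"
    using e by (simp add: split_edges_def)
  then have "e \<in> kpart4_edges (middle_part A B c)"
    using kpart4_edges_middle_part_split_edges[of c A B e] c acb d assms by blast
  then show "e \<in> (\<Union>c\<in>{c\<in>A. \<exists>x\<in>A. \<exists>y\<in>A. x < c \<and> c < y}. kpart4_edges (middle_part A B c))"
    using c by blast
qed

lemma list_partitions_middle_split:
  assumes "finite A" "A \<inter> B = {}"
  shows "list_partitions kpart4_edges (middle_split A B) (split_edges A B 3 1)"
proof -
  define cs where "cs = filter (\<lambda>c. \<exists>x\<in>A. \<exists>y\<in>A. x < c \<and> c < y) (sorted_list_of_set A)"
  have cs: "set cs = {c\<in>A. \<exists>x\<in>A. \<exists>y\<in>A. x < c \<and> c < y}" "distinct cs"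
    using assms(1) by (simp_all add: cs_def)
  have "list_partitions kpart4_edges (map (middle_part A B) cs) (split_edges A B 3 1)"
  proof (rule list_partitions_map_distinct[OF cs(2)])
    show "kpart4_edges (middle_part A B c) \<inter> kpart4_edges (middle_part A B c') = {}"
      if "c \<in> set cs" "c' \<in> set cs" "c \<noteq> c'" for c c'
      using that cs(1) by (intro kpart4_edges_middle_part_disjoint[OF _ _ _ assms(2)]) simp_all
    show "(\<Union>c\<in>set cs. kpart4_edges (middle_part A B c)) = split_edges A B 3 1"
      unfolding cs(1) by (rule UN_kpart4_edges_middle_part[OF assms(2)])
  qed
  then show ?thesis
    by (simp add: middle_split_def cs_def)
qed

lemma complete_4partite_middle_split:
  assumes "P \<in> set (middle_split A B)" "finite A" "A \<inter> B = {}" "B \<noteq> {}" "A \<union> B \<subseteq> {..<n}"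
  shows "is_complete_4partite n P"
  using assms by (auto simp: middle_split_def middle_part_def is_complete_4partite_def)

section \<open>Adding a vertex\<close>

lemma is_complete_4partite_mono: "is_complete_4partite n P \<Longrightarrow> n \<le> N \<Longrightarrow> is_complete_4partite N P"
  unfolding is_complete_4partite_def by (cases P) auto

lemma complete_4partite_partition_0: "complete_4partite_partition 0 []"
proof -
  have "hedges4 0 = {}"
    by (auto simp: hedges4_def)
  then show ?thesis
    by (simp add: complete_4partite_partition_def list_partitions_Nil)
qed

lemma f4_0: "f4 0 = 0"
  using f4_le_length[OF complete_4partite_partition_0] by simp

lemma hedges4_Suc: "hedges4 (Suc n) = hedges4 n \<union> split_edges {..<n} {n} 3 1"
proof -
  have "hedges4 (Suc n) = {e. e \<subseteq> {..<n} \<union> {n} \<and> card e = 4}"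
    by (auto simp: hedges4_def lessThan_Suc)
  also have "\<dots> = split_edges {..<n} {n} 4 0 \<union> split_edges {..<n} {n} 3 1"
    using card4_subsets_split[of "{..<n}" "{n}"] split_edges_singleton_empty[of 2 "{..<n}" n 2]
      split_edges_singleton_empty[of 3 "{..<n}" n 1] split_edges_singleton_empty[of 4 "{..<n}" n 0]
    by simp
  finally show ?thesis
    using split_edges_4_0[of "{..<n}" "{n}"] by (simp add: hedges4_def)
qed

lemma complete_4partite_partition_Suc:
  assumes "complete_4partite_partition n Ps"
  shows "complete_4partite_partition (Suc n) (Ps @ middle_split {..<n} {n})"
proof -
  have "hedges4 n \<inter> split_edges {..<n} {n} 3 1 = {}"
    by (auto simp: hedges4_def split_edges_def Int_absorb2)
  then have "list_partitions kpart4_edges (Ps @ middle_split {..<n} {n}) (hedges4 (Suc n))"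
    unfolding hedges4_Suc
    using assms list_partitions_middle_split[of "{..<n}" "{n}"]
    by (intro list_partitions_append) (auto simp: complete_4partite_partition_def)
  moreover have "is_complete_4partite (Suc n) P" if "P \<in> set (Ps @ middle_split {..<n} {n})" for P
    using that assms is_complete_4partite_mono[of n P "Suc n"]
      complete_4partite_middle_split[of P "{..<n}" "{n}" "Suc n"]
    by (auto simp: complete_4partite_partition_def)
  ultimately show ?thesis
    by (simp add: complete_4partite_partition_def)
qed

lemma complete_4partite_partition_exists: "\<exists>Ps. complete_4partite_partition n Ps"
  by (induction n) (use complete_4partite_partition_0 complete_4partite_partition_Suc in blast)+

lemma f4_Suc_le: "f4 (Suc n) \<le> f4 n + n"
proof -
  obtain Ps where Ps: "complete_4partite_partition n Ps" "length Ps = f4 n"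
    using f4_attained complete_4partite_partition_exists by blast
  then have "f4 (Suc n) \<le> length (Ps @ middle_split {..<n} {n})"
    by (intro f4_le_length complete_4partite_partition_Suc)
  also have "\<dots> \<le> f4 n + n"
    using length_middle_split[of "{..<n}" "{n}"] Ps(2) by simp
  finally show ?thesis .
qed

section \<open>Doubling the vertex set\<close>

definition map4 :: "(nat \<Rightarrow> nat) \<Rightarrow> quadruple \<Rightarrow> quadruple" where
  "map4 f P = (case P of (V1, V2, V3, V4) \<Rightarrow> (f ` V1, f ` V2, f ` V3, f ` V4))"

lemma kpart4_edges_map4: "kpart4_edges (map4 f P) = image f ` kpart4_edges P"
proof -
  obtain V1 V2 V3 V4 where P: "P = (V1, V2, V3, V4)"
    by (cases P)
  show ?thesis
  proof (intro set_eqI iffI)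
    fix e
    assume "e \<in> kpart4_edges (map4 f P)"
    then have "e \<in> kpart4_edges (f ` V1, f ` V2, f ` V3, f ` V4)"
      by (simp add: P map4_def)
    then obtain a b c d where "e = {f a, f b, f c, f d}" "a \<in> V1" "b \<in> V2" "c \<in> V3" "d \<in> V4"
      unfolding kpart4_edges_iff by blast
    then have "e = f ` {a, b, c, d}" "{a, b, c, d} \<in> kpart4_edges P"
      unfolding P kpart4_edges_iff by auto
    then show "e \<in> image f ` kpart4_edges P"
      by blast
  next
    fix e
    assume "e \<in> image f ` kpart4_edges P"
    then obtain e' where "e = f ` e'" "e' \<in> kpart4_edges (V1, V2, V3, V4)"
      unfolding P by blast
    then obtain a b c d where "e = f ` {a, b, c, d}" "a \<in> V1" "b \<in> V2" "c \<in> V3" "d \<in> V4"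
      unfolding kpart4_edges_iff by blast
    then have "e \<in> kpart4_edges (f ` V1, f ` V2, f ` V3, f ` V4)"
      unfolding kpart4_edges_iff by blast
    then show "e \<in> kpart4_edges (map4 f P)"
      by (simp add: P map4_def)
  qed
qed

lemma complete_4partite_map4:
  assumes "is_complete_4partite n P" "inj f" "f ` {..<n} \<subseteq> {..<N}"
  shows "is_complete_4partite N (map4 f P)"
proof -
  obtain V1 V2 V3 V4 where P: "P = (V1, V2, V3, V4)"
    by (cases P)
  have "f ` V \<subseteq> {..<N}" if "V \<subseteq> {..<n}" for V
    using that assms(3) by blast
  then show ?thesis
    using assms(1)
    by (simp add: P is_complete_4partite_def map4_def image_Int[OF assms(2), symmetric])
qed

definition glue :: "(nat \<Rightarrow> nat) \<Rightarrow> nat set \<times> nat set \<Rightarrow> nat set" where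
  "glue f pq = fst pq \<union> f ` snd pq"

definition block_to_4partite :: "(nat \<Rightarrow> nat) \<Rightarrow> quadruple \<Rightarrow> quadruple" where
  "block_to_4partite f B = (case B of (X1, Y1, X2, Y2) \<Rightarrow> (X1, Y1, f ` X2, f ` Y2))"

lemma kpart4_edges_block_to_4partite: "kpart4_edges (block_to_4partite f B) = glue f ` block B"
proof -
  obtain X1 Y1 X2 Y2 where B: "B = (X1, Y1, X2, Y2)"
    by (cases B)
  show ?thesis
  proof (intro set_eqI iffI)
    fix e
    assume "e \<in> kpart4_edges (block_to_4partite f B)"
    then have "e \<in> kpart4_edges (X1, Y1, f ` X2, f ` Y2)"
      by (simp add: B block_to_4partite_def)
    then obtain a b c d where "e = {a, b, f c, f d}" "a \<in> X1" "b \<in> Y1" "c \<in> X2" "d \<in> Y2"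
      unfolding kpart4_edges_iff by blast
    then have "e = glue f ({a, b}, {c, d})" "({a, b}, {c, d}) \<in> block B"
      unfolding B block_def bip_edges_def glue_def by auto
    then show "e \<in> glue f ` block B"
      by blast
  next
    fix e
    assume "e \<in> glue f ` block B"
    then obtain a b c d where "e = glue f ({a, b}, {c, d})" "a \<in> X1" "b \<in> Y1" "c \<in> X2" "d \<in> Y2"
      unfolding B block_def bip_edges_def by auto
    then have "e = {a, b, f c, f d}" "f c \<in> f ` X2" "f d \<in> f ` Y2"
      by (auto simp: glue_def)
    then have "e \<in> kpart4_edges (X1, Y1, f ` X2, f ` Y2)"
      unfolding kpart4_edges_iff using \<open>a \<in> X1\<close> \<open>b \<in> Y1\<close> by blast
    then show "e \<in> kpart4_edges (block_to_4partite f B)"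
      by (simp add: B block_to_4partite_def)
  qed
qed

lemma complete_4partite_block_to_4partite:
  assumes "is_block {..<m} (Kn_edges m) {..<m} (Kn_edges m) B"
  shows "is_complete_4partite (2 * m) (block_to_4partite ((+) m) B)"
proof -
  obtain X1 Y1 X2 Y2 where B: "B = (X1, Y1, X2, Y2)"
    by (cases B)
  have "X1 \<subseteq> {..<m}" "Y1 \<subseteq> {..<m}" "X2 \<subseteq> {..<m}" "Y2 \<subseteq> {..<m}"
    "X1 \<noteq> {}" "Y1 \<noteq> {}" "X2 \<noteq> {}" "Y2 \<noteq> {}" "X1 \<inter> Y1 = {}" "X2 \<inter> Y2 = {}"
    using assms by (auto simp: B is_block_def is_complete_bipartite_subgraph_def)
  then show ?thesis
    by (auto simp: B block_to_4partite_def is_complete_4partite_def)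
qed

lemma subsets_card_image:
  assumes "inj_on f V"
  shows "{e. e \<subseteq> f ` V \<and> card e = k} = image f ` {e. e \<subseteq> V \<and> card e = k}"
proof (intro set_eqI iffI)
  fix e
  assume "e \<in> {e. e \<subseteq> f ` V \<and> card e = k}"
  then obtain e' where "e' \<subseteq> V" "e = f ` e'" "card e = k"
    by (auto simp: subset_image_iff)
  then show "e \<in> image f ` {e. e \<subseteq> V \<and> card e = k}"
    using card_image[OF inj_on_subset[OF assms]] by auto
qed (use card_image[OF inj_on_subset[OF assms]] in auto)

lemma glue_Int:
  assumes "p \<subseteq> A" "q \<subseteq> A" "A \<inter> f ` A = {}"
  shows "glue f (p, q) \<inter> A = p" "glue f (p, q) \<inter> f ` A = f ` q"
  using assms by (auto simp: glue_def)

lemma bij_betw_glue: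
  assumes "inj_on f A" "A \<inter> f ` A = {}"
  shows "bij_betw (glue f) ({p. p \<subseteq> A \<and> card p = 2} \<times> {q. q \<subseteq> A \<and> card q = 2})
    (split_edges A (f ` A) 2 2)"
proof (rule bij_betw_imageI)
  have card_f: "card (f ` q) = card q" if "q \<subseteq> A" for q
    using card_image[OF inj_on_subset[OF assms(1) that]] .
  show "inj_on (glue f) ({p. p \<subseteq> A \<and> card p = 2} \<times> {q. q \<subseteq> A \<and> card q = 2})"
  proof (rule inj_onI, clarify)
    fix p q p' q'
    assume "p \<subseteq> A" "q \<subseteq> A" "p' \<subseteq> A" "q' \<subseteq> A" "glue f (p, q) = glue f (p', q')"
    then have "p = p'" "f ` q = f ` q'"
      using glue_Int[OF _ _ assms(2)] by metis+
    then show "p = p' \<and> q = q'"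
      using inj_on_image_eq_iff[OF assms(1)] \<open>q \<subseteq> A\<close> \<open>q' \<subseteq> A\<close> by blast
  qed
  show "glue f ` ({p. p \<subseteq> A \<and> card p = 2} \<times> {q. q \<subseteq> A \<and> card q = 2}) = split_edges A (f ` A) 2 2"
  proof (intro set_eqI iffI)
    fix e
    assume "e \<in> glue f ` ({p. p \<subseteq> A \<and> card p = 2} \<times> {q. q \<subseteq> A \<and> card q = 2})"
    then show "e \<in> split_edges A (f ` A) 2 2"
      using glue_Int[OF _ _ assms(2)] card_f by (auto simp: split_edges_def glue_def)
  next
    fix e
    assume e: "e \<in> split_edges A (f ` A) 2 2"
    then obtain q where q: "q \<subseteq> A" "e \<inter> f ` A = f ` q"
      by (meson Int_lower2 subset_image_iff)
    then have "e = glue f (e \<inter> A, q)" "card q = 2"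
      using e card_f by (auto simp: split_edges_def glue_def)
    then show "e \<in> glue f ` ({p. p \<subseteq> A \<and> card p = 2} \<times> {q. q \<subseteq> A \<and> card q = 2})"
      using e q(1) by (auto simp: split_edges_def)
  qed
qed

lemma add_image_lessThan: "(+) m ` {..<m} = {m..<2 * (m::nat)}"
  by (simp add: lessThan_atLeast0 mult_2)

lemma inj_add_left_nat: "inj ((+) (m::nat))"
  by (rule injI) simp

lemma lessThan_Int_atLeastLessThan: "{..<m} \<inter> {m..<n} = ({} :: nat set)"
  by auto

lemma atLeastLessThan_subset_lessThan: "{m..<n} \<subseteq> ({..<n} :: nat set)"
  by auto

lemma hedges4_double:
  "hedges4 (2 * m) =
    split_edges {..<m} {m..<2 * m} 4 0 \<union> split_edges {..<m} {m..<2 * m} 3 1 \<union>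
    split_edges {..<m} {m..<2 * m} 2 2 \<union> split_edges {..<m} {m..<2 * m} 1 3 \<union>
    split_edges {..<m} {m..<2 * m} 0 4"
proof -
  have "{..<2 * m} = {..<m} \<union> {m..<2 * m}"
    by auto
  then show ?thesis
    using card4_subsets_split[of "{..<m}" "{m..<2 * m}"] lessThan_Int_atLeastLessThan
    by (simp add: hedges4_def)
qed

lemma hedges4_eq_split_edges: "hedges4 m = split_edges {..<m} {m..<2 * m} 4 0"
  using split_edges_4_0[of "{..<m}" "{m..<2 * m}"] lessThan_Int_atLeastLessThan
  by (simp add: hedges4_def)

lemma image_add_hedges4: "image ((+) m) ` hedges4 m = split_edges {..<m} {m..<2 * m} 0 4"
proof -
  have "split_edges {..<m} {m..<2 * m} 0 4 = {e. e \<subseteq> (+) m ` {..<m} \<and> card e = 4}"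
    using split_edges_4_0[of "{m..<2 * m}" "{..<m}"] lessThan_Int_atLeastLessThan[of m "2 * m"]
    by (simp add: split_edges_swap[symmetric] add_image_lessThan Int_commute Un_commute)
  then show ?thesis
    using subsets_card_image[of "(+) m" "{..<m}" 4] inj_add_left_nat
    by (simp add: hedges4_def inj_on_subset)
qed

lemma bij_betw_glue_Kn_edges:
  "bij_betw (glue ((+) m)) (Kn_edges m \<times> Kn_edges m) (split_edges {..<m} {m..<2 * m} 2 2)"
  using bij_betw_glue[of "(+) m" "{..<m}"] inj_add_left_nat lessThan_Int_atLeastLessThan
  by (simp add: Kn_edges_def add_image_lessThan inj_on_subset)

definition double_partition :: "nat \<Rightarrow> quadruple list \<Rightarrow> quadruple list \<Rightarrow> quadruple list" where
  "double_partition m Ps Bs =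
     Ps @ middle_split {..<m} {m..<2 * m} @ map (block_to_4partite ((+) m)) Bs @
     middle_split {m..<2 * m} {..<m} @ map (map4 ((+) m)) Ps"

lemma length_double_partition:
  "length (double_partition m Ps Bs) \<le> 2 * length Ps + length Bs + 2 * m"
  using length_middle_split[of "{..<m}" "{m..<2 * m}"] length_middle_split[of "{m..<2 * m}" "{..<m}"]
  by (simp add: double_partition_def)

lemma list_partitions_double_partition:
  assumes "complete_4partite_partition m Ps" "block_partition m Bs"
  shows "list_partitions kpart4_edges (double_partition m Ps Bs) (hedges4 (2 * m))"
proof -
  let ?S = "split_edges {..<m} {m..<2 * m}"
  have "list_partitions kpart4_edges Ps (?S 4 0)"
    using assms(1) hedges4_eq_split_edges by (simp add: complete_4partite_partition_def)
  moreover have "list_partitions kpart4_edges (middle_split {..<m} {m..<2 * m}) (?S 3 1)"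
    by (rule list_partitions_middle_split) auto
  moreover have "list_partitions kpart4_edges (map (block_to_4partite ((+) m)) Bs) (?S 2 2)"
    using assms(2) bij_betw_glue_Kn_edges[of m]
      list_partitions_map_image[of block Bs "Kn_edges m \<times> Kn_edges m" kpart4_edges
        "block_to_4partite ((+) m)" "glue ((+) m)"]
    by (simp add: block_partition_def bij_betw_def kpart4_edges_block_to_4partite)
  moreover have "list_partitions kpart4_edges (middle_split {m..<2 * m} {..<m}) (?S 1 3)"
    using list_partitions_middle_split[of "{m..<2 * m}" "{..<m}"]
      split_edges_swap[of "{m..<2 * m}" "{..<m}" 3 1] lessThan_Int_atLeastLessThan[of m "2 * m"]
    by (simp add: Int_commute)
  moreover have "list_partitions kpart4_edges (map (map4 ((+) m)) Ps) (?S 0 4)"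
    using assms(1) image_add_hedges4[of m] inj_add_left_nat inj_on_image[of "(+) m"]
      list_partitions_map_image[of kpart4_edges Ps "hedges4 m" kpart4_edges
        "map4 ((+) m)" "image ((+) m)"]
    by (simp add: complete_4partite_partition_def kpart4_edges_map4 inj_on_subset)
  ultimately have "list_partitions kpart4_edges
      ((((Ps @ middle_split {..<m} {m..<2 * m}) @ map (block_to_4partite ((+) m)) Bs) @
        middle_split {m..<2 * m} {..<m}) @ map (map4 ((+) m)) Ps) (hedges4 (2 * m))"
    unfolding hedges4_double by (intro list_partitions_append) (auto simp: split_edges_def)
  then show ?thesis
    by (simp add: double_partition_def)
qed

lemma complete_4partite_double_partition:
  assumes "0 < m" "complete_4partite_partition m Ps" "block_partition m Bs"
    and "P \<in> set (double_partition m Ps Bs)"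
  shows "is_complete_4partite (2 * m) P"
proof -
  have "(+) m ` {..<m} \<subseteq> {..<2 * m}"
    by (auto simp: add_image_lessThan)
  then have "is_complete_4partite (2 * m) (map4 ((+) m) Q)" if "Q \<in> set Ps" for Q
    using that assms(2) complete_4partite_map4[of m Q "(+) m" "2 * m"] inj_add_left_nat
    by (auto simp: complete_4partite_partition_def)
  moreover have "is_complete_4partite (2 * m) Q" if "Q \<in> set Ps" for Q
    using that assms(2) is_complete_4partite_mono[of m Q "2 * m"]
    by (simp add: complete_4partite_partition_def)
  moreover have "is_complete_4partite (2 * m) Q"
    if "Q \<in> set (middle_split {..<m} {m..<2 * m}) \<or> Q \<in> set (middle_split {m..<2 * m} {..<m})" for Q
    using that assms(1) lessThan_Int_atLeastLessThan[of m "2 * m"] atLeastLessThan_subset_lessThan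
      complete_4partite_middle_split[of Q "{..<m}" "{m..<2 * m}" "2 * m"]
      complete_4partite_middle_split[of Q "{m..<2 * m}" "{..<m}" "2 * m"]
    by (auto simp: Int_commute)
  moreover have "is_complete_4partite (2 * m) (block_to_4partite ((+) m) B)" if "B \<in> set Bs" for B
    using that assms(3) complete_4partite_block_to_4partite by (simp add: block_partition_def)
  moreover have "P \<in> set Ps \<or> P \<in> set (middle_split {..<m} {m..<2 * m}) \<or>
      P \<in> (block_to_4partite ((+) m)) ` set Bs \<or> P \<in> set (middle_split {m..<2 * m} {..<m}) \<or>
      P \<in> map4 ((+) m) ` set Ps"
    using assms(4) by (simp add: double_partition_def)
  ultimately show ?thesis
    by blast
qed

lemma complete_4partite_partition_double_partition:
  assumes "0 < m" "complete_4partite_partition m Ps" "block_partition m Bs"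
  shows "complete_4partite_partition (2 * m) (double_partition m Ps Bs)"
  using assms list_partitions_double_partition complete_4partite_double_partition
  by (simp add: complete_4partite_partition_def)

lemma f4_double_le: "f4 (2 * m) \<le> 2 * f4 m + g m + 2 * m"
proof (cases "m = 0")
  case True
  then show ?thesis
    by (simp add: f4_0)
next
  case False
  obtain Ps where Ps: "complete_4partite_partition m Ps" "length Ps = f4 m"
    using f4_attained complete_4partite_partition_exists by blast
  obtain Bs where Bs: "block_partition m Bs" "length Bs = g m"
    using g_attained block_partition_exists by blast
  have "f4 (2 * m) \<le> length (double_partition m Ps Bs)"
    using False Ps(1) Bs(1) by (intro f4_le_length complete_4partite_partition_double_partition) auto
  then show ?thesis
    using length_double_partition[of m Ps Bs] Ps(2) Bs(2) by simp
qed

lemma f4_le_halving: "f4 n \<le> 2 * f4 (n div 2) + g (n div 2) + 4 * (n div 2)"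
proof (cases "even n")
  case True
  then obtain k where "n = 2 * k"
    by blast
  then show ?thesis
    using f4_double_le[of k] by simp
next
  case False
  then have "n = Suc (2 * (n div 2))"
    by simp
  then have "f4 n \<le> f4 (2 * (n div 2)) + 2 * (n div 2)"
    using f4_Suc_le[of "2 * (n div 2)"] by simp
  then show ?thesis
    using f4_double_le[of "n div 2"] by simp
qed

section \<open>The asymptotic bound\<close>

lemma real_le_mult_sqrt: "real m \<le> real m * sqrt (real m)"
  by (cases "m = 0") auto

lemma sqrt_growth_absorbs_linear:
  "10 * (real m * sqrt (real m)) + 4 * real m \<le> 5 * (2 * real m) * sqrt (2 * real m)"
proof -
  have "(7 / 5 :: real) \<le> sqrt 2"
    by (rule real_le_rsqrt) (simp add: power2_eq_square)
  then have "14 * (real m * sqrt (real m)) \<le> 5 * (2 * real m) * sqrt (2 * real m)"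
    using mult_right_mono[of "7 / 5" "sqrt 2" "10 * (real m * sqrt (real m))"]
    by (simp add: real_sqrt_mult algebra_simps)
  then show ?thesis
    using real_le_mult_sqrt[of m] by linarith
qed

lemma f4_upper_bound:
  fixes \<alpha> :: real
  assumes "0 \<le> \<alpha>" "\<forall>m. real (g m) \<le> \<alpha> * (real m)^2"
  shows "real (f4 n) \<le> \<alpha> * (real n)^2 / 2 + 5 * real n * sqrt (real n)"
proof (induction n rule: less_induct)
  case (less n)
  show ?case
  proof (cases "n = 0")
    case True
    then show ?thesis
      by (simp add: f4_0)
  next
    case False
    define m where "m = n div 2"
    define x where "x = real m"
    have IH: "real (f4 m) \<le> \<alpha> * x^2 / 2 + 5 * x * sqrt x"
      using less False by (simp add: m_def x_def)
    have x: "0 \<le> x" "2 * x \<le> real n"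
      unfolding x_def m_def by linarith+
    have "real (f4 n) \<le> real (2 * f4 m + g m + 4 * m)"
      unfolding m_def using f4_le_halving of_nat_mono by blast
    also have "\<dots> \<le> 2 * (\<alpha> * x^2 / 2 + 5 * x * sqrt x) + \<alpha> * x^2 + 4 * x"
      using IH assms(2)[rule_format, of m] by (simp add: x_def)
    also have "\<dots> = \<alpha> * (2 * x)^2 / 2 + (10 * (x * sqrt x) + 4 * x)"
      by (simp add: algebra_simps power2_eq_square)
    also have "\<dots> \<le> \<alpha> * (real n)^2 / 2 + 5 * (2 * x) * sqrt (2 * x)"
      using x assms(1) sqrt_growth_absorbs_linear[of m, folded x_def]
      by (intro add_mono divide_right_mono mult_left_mono power_mono) auto
    also have "\<dots> \<le> \<alpha> * (real n)^2 / 2 + 5 * real n * sqrt (real n)"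
      using x by (intro add_left_mono mult_mono) auto
    finally show ?thesis .
  qed
qed

theorem mainTheorem3:
  fixes \<alpha> :: real
  assumes "\<alpha> > 0"
    and "\<forall>n. real (g n) \<le> \<alpha> * (real n)^2"
  shows "\<forall>\<epsilon>>0. eventually (\<lambda>n. real (f4 n) \<le> \<alpha> * (1 + \<epsilon>) * (real n)^2 / 2) at_top"
proof (intro allI impI)
  fix \<epsilon> :: real
  assume "\<epsilon> > 0"
  have "(\<lambda>n. real n * sqrt (real n)) \<in> o(\<lambda>n. (real n)^2)"
    by real_asymp
  then have "eventually (\<lambda>n. norm (real n * sqrt (real n)) \<le> \<alpha> * \<epsilon> / 10 * norm ((real n)^2)) at_top"
    by (rule landau_o.smallD) (use assms(1) \<open>\<epsilon> > 0\<close> in simp)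
  then show "eventually (\<lambda>n. real (f4 n) \<le> \<alpha> * (1 + \<epsilon>) * (real n)^2 / 2) at_top"
  proof (rule eventually_mono)
    fix n
    assume "norm (real n * sqrt (real n)) \<le> \<alpha> * \<epsilon> / 10 * norm ((real n)^2)"
    then have "real n * sqrt (real n) \<le> \<alpha> * \<epsilon> / 10 * (real n)^2"
      by simp
    then show "real (f4 n) \<le> \<alpha> * (1 + \<epsilon>) * (real n)^2 / 2"
      using f4_upper_bound[of \<alpha> n] assms by (simp add: algebra_simps)
  qed
qed

end
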